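(* Let $0<a$ and let $\mathbf v_c=(v_{c1},v_{c2},v_{c3},v_{c4})$ satisfy $a\le v_{c1}\le v_{c2}\le v_{c3}\le v_{c4}<\infty$. Let $\mathbf p_c=(p_{c1},p_{c2},p_{c3},p_{c4})$ be the unique maximizer of $L_{\mathbf v_c}$ over the simplex $\Delta$. For $\mathbf v_t\in[a,\infty)^4$ put $$R(\mathbf v_t,\mathbf v_c)=1-\left(\frac{L_{\mathbf v_t}(\mathbf p_c)}{\max_{\mathbf p\in\Delta}L_{\mathbf v_t}(\mathbf p)}\right)^{1/3},$$ and $R_{\max}(c)=\sup_{\mathbf v_t\in[a,\infty)^4}R(\mathbf v_t,\mathbf v_c)$. (i) If $v_{c4}\ge v_{c1}+v_{c2}+v_{c3}$, then $R_{\max}(c)=1$. (ii) If $v_{c4}<v_{c1}+v_{c2}+v_{c3}$, then $R_{\max}(c)=1-3\,(p_{c2}p_{c3}p_{c4})^{1/3}$.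
   Context: Setting: a $2^2$ experiment with binary response under a generalized linear model with main-effects linear predictor $\eta=\beta_0+\beta_1x_1+\beta_2x_2$. A design is a vector $\mathbf p=(p_1,p_2,p_3,p_4)$ in the simplex $\Delta=\{p_i\ge0,\ \sum_i p_i=1\}$. With $w_i>0$ the GLM weights at the four design points and $v_i=1/w_i$, the $D$-criterion equals $16w_1w_2w_3w_4L_{\mathbf v}(\mathbf p)$ where $$L_{\mathbf v}(\mathbf p)=v_4p_1p_2p_3+v_3p_1p_2p_4+v_2p_1p_3p_4+v_1p_2p_3p_4 .$$ For every $\mathbf v$ with positive entries, $L_{\mathbf v}$ has a unique maximizer on $\Delta$. $\mathbf v_c$ is the assumed value, $\mathbf v_t$ the true value, and $R$ the relative loss of efficiency. *)

theory Defs
  imports Complex_Main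
begin

text \<open>Vectors in R^4 are represented as functions nat => real, indexed by 1..4.
  A design is normalised to vanish outside the index set {1..4}, so that the
  maximiser of L_v over the simplex is unique as a function.\<close>

definition simplex4 :: "(nat \<Rightarrow> real) set" where
  "simplex4 = {p. (\<forall>i\<in>{1..4}. 0 \<le> p i) \<and> (\<forall>i. i \<notin> {1..4} \<longrightarrow> p i = 0)
                  \<and> p 1 + p 2 + p 3 + p 4 = 1}"

definition Lv :: "(nat \<Rightarrow> real) \<Rightarrow> (nat \<Rightarrow> real) \<Rightarrow> real" where
  "Lv v p = v 4 * p 1 * p 2 * p 3 + v 3 * p 1 * p 2 * p 4
          + v 2 * p 1 * p 3 * p 4 + v 1 * p 2 * p 3 * p 4"

definition argmaxL :: "(nat \<Rightarrow> real) \<Rightarrow> (nat \<Rightarrow> real)" where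
  "argmaxL v = (THE p. p \<in> simplex4 \<and> (\<forall>q\<in>simplex4. Lv v q \<le> Lv v p))"

definition maxL :: "(nat \<Rightarrow> real) \<Rightarrow> real" where
  "maxL v = Sup (Lv v ` simplex4)"

definition Rloss :: "(nat \<Rightarrow> real) \<Rightarrow> (nat \<Rightarrow> real) \<Rightarrow> real" where
  "Rloss vt vc = 1 - (Lv vt (argmaxL vc) / maxL vt) powr (1/3)"

definition Rmax :: "real \<Rightarrow> (nat \<Rightarrow> real) \<Rightarrow> real" where
  "Rmax a vc = Sup ((\<lambda>vt. Rloss vt vc) ` {vt. \<forall>i\<in>{1..4}. a \<le> vt i})"

end

theory Submission
  imports Defs "HOL-Analysis.Analysis"
begin

(*
  If v4 >= v1 + v2 + v3, AM-GM applied termwise shows that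
  (1/3, 1/3, 1/3, 0) is the unique maximiser. Otherwise the maximiser is interior: on a face
  p_k = 0 the maximiser is the centroid of that face, and moving towards the vertex e_k would
  increase L_v unless 2 v_k >= v1 + ... + v4. Interior maximisers are unique because along every
  line the cubic t |-> L_v(p + t d) is strictly log-concave, and two interior maximisers would give
  a cubic with equal values and vanishing slopes at 0 and 1. Swapping coordinates shows that the
  first coordinate of p_c is the largest one.
  With m = p_c2 p_c3 p_c4, each of the four triple products in L_{v_t}(p_c) is at least m, and
  max L_{v_t} <= (v_t1 + ... + v_t4)/27, so L_{v_t}(p_c) >= 27 m max L_{v_t}, i.e.
  R <= 1 - 3 m^(1/3). The choice v_t = (M, a, a, a) attains this bound as M -> infinity.
*)

lemma simplex4_iff:
  "p \<in> simplex4 \<longleftrightarrow> p 1 \<ge> 0 \<and> p 2 \<ge> 0 \<and> p 3 \<ge> 0 \<and> p 4 \<ge> 0 \<and>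
     (\<forall>i. i \<notin> {1..4} \<longrightarrow> p i = 0) \<and> p 1 + p 2 + p 3 + p 4 = 1"
proof -
  have "{1..4::nat} = {1,2,3,4}" by auto
  then show ?thesis unfolding simplex4_def by auto
qed

lemma simplex4_eqI:
  assumes "p \<in> simplex4" "q \<in> simplex4" "p 1 = q 1" "p 2 = q 2" "p 3 = q 3" "p 4 = q 4"
  shows "p = q"
proof
  fix i
  show "p i = q i"
  proof (cases "i \<in> {1..4}")
    case True
    then have "i = 1 \<or> i = 2 \<or> i = 3 \<or> i = 4" by auto
    then show ?thesis using assms by auto
  next
    case False
    then show ?thesis using assms unfolding simplex4_iff by auto
  qed
qed

lemma simplex4_le_1: "p \<in> simplex4 \<Longrightarrow> p i \<le> 1"
proof (cases "i \<in> {1..4}")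
  case True
  assume "p \<in> simplex4"
  moreover have "i = 1 \<or> i = 2 \<or> i = 3 \<or> i = 4" using True by auto
  ultimately show ?thesis unfolding simplex4_iff by auto
qed (auto simp: simplex4_def)

lemma simplex4_line:
  assumes p: "p \<in> simplex4" and q: "q \<in> simplex4" and "t \<le> 1"
    and below: "\<And>i. i \<in> {1..4} \<Longrightarrow> - t \<le> p i"
  shows "(\<lambda>i. p i + t * (q i - p i)) \<in> simplex4"
proof -
  have nonneg: "0 \<le> x + t * (y - x)" if "0 \<le> y" "y \<le> 1" "- t \<le> x" "0 \<le> x" for x y :: real
  proof -
    have convex: "x + t * (y - x) = (1 - t) * x + t * y" by (simp add: algebra_simps)
    show ?thesis
    proof (cases "0 \<le> t")
      case True
      then show ?thesis using that \<open>t \<le> 1\<close> convex by simp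
    next
      case False
      then have "t \<le> t * y" "x \<le> (1 - t) * x" using that by (simp_all add: mult_le_cancel_left)
      then show ?thesis using that convex by linarith
    qed
  qed
  have "p i + t * (q i - p i) \<ge> 0" if "i \<in> {1..4}" for i
    using nonneg[of "q i" "p i"] below[OF that] simplex4_le_1[OF q] p q that
    unfolding simplex4_def by auto
  moreover have "p 1 + t * (q 1 - p 1) + (p 2 + t * (q 2 - p 2)) + (p 3 + t * (q 3 - p 3))
      + (p 4 + t * (q 4 - p 4)) = (p 1 + p 2 + p 3 + p 4) + t * ((q 1 + q 2 + q 3 + q 4) - (p 1 + p 2 + p 3 + p 4))"
    by (simp add: algebra_simps)
  ultimately show ?thesis using p q unfolding simplex4_def by auto
qed

lemma simplex4_transpose:
  assumes "i \<in> {1..4}" "j \<in> {1..4}" "p \<in> simplex4"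
  shows "p \<circ> Transposition.transpose i j \<in> simplex4"
proof -
  have "Transposition.transpose i j k = k" if "k \<notin> {1..4}" for k
    using that assms(1,2) by (auto intro: transpose_apply_other)
  moreover have "i = 1 \<or> i = 2 \<or> i = 3 \<or> i = 4" "j = 1 \<or> j = 2 \<or> j = 3 \<or> j = 4"
    using assms by auto
  ultimately show ?thesis using assms(3) unfolding simplex4_iff
    by (elim disjE; simp add: transpose_def; linarith)
qed

lemma Lv_transpose:
  assumes "i \<in> {1..4}" "j \<in> {1..4}"
  shows "Lv (v \<circ> Transposition.transpose i j) (p \<circ> Transposition.transpose i j) = Lv v p"
proof -
  have "i = 1 \<or> i = 2 \<or> i = 3 \<or> i = 4" "j = 1 \<or> j = 2 \<or> j = 3 \<or> j = 4" using assms by auto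
  then show ?thesis unfolding Lv_def by (elim disjE; simp add: transpose_def; simp add: algebra_simps)
qed

definition face_centroid :: "nat \<Rightarrow> nat \<Rightarrow> real" where
  "face_centroid k i = (if i \<in> {1..4} \<and> i \<noteq> k then 1/3 else 0)"

lemma face_centroid_simplex4: "k \<in> {1..4} \<Longrightarrow> face_centroid k \<in> simplex4"
  unfolding simplex4_def face_centroid_def by auto

lemma Lv_face_centroid:
  assumes "k \<in> {1..4}"
  shows "Lv v (face_centroid k) = v k / 27"
proof -
  have "k = 1 \<or> k = 2 \<or> k = 3 \<or> k = 4" using assms by auto
  then show ?thesis unfolding Lv_def face_centroid_def by auto
qed

subsection \<open>AM--GM for three numbers\<close>

lemma cube_sum_minus_27_prod:
  fixes x y z :: real
  shows "(x + y + z)^3 - 27 * (x * y * z) = ((x + y + z) / 2) * ((x - y)^2 + (y - z)^2 + (z - x)^2)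
           + 3 * (x * (y - z)^2 + y * (x - z)^2 + z * (x - y)^2)"
  by (simp add: field_simps power2_eq_square power3_eq_cube)

lemma prod3_le_1_27:
  fixes x y z :: real
  assumes "x \<ge> 0" "y \<ge> 0" "z \<ge> 0" "x + y + z \<le> 1"
  shows "x * y * z \<le> 1/27"
proof -
  have "0 \<le> ((x + y + z) / 2) * ((x - y)^2 + (y - z)^2 + (z - x)^2)
           + 3 * (x * (y - z)^2 + y * (x - z)^2 + z * (x - y)^2)"
    using assms by (intro add_nonneg_nonneg mult_nonneg_nonneg) auto
  moreover have "(x + y + z)^3 \<le> 1" using assms by (simp add: power_le_one)
  ultimately show ?thesis using cube_sum_minus_27_prod[of x y z] by linarith
qed

lemma prod3_ge_1_27_imp_thirds:
  fixes x y z :: real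
  assumes "x \<ge> 0" "y \<ge> 0" "z \<ge> 0" "x + y + z = 1" "x * y * z \<ge> 1/27"
  shows "x = 1/3" "y = 1/3" "z = 1/3"
proof -
  define S where "S = (x - y)^2 + (y - z)^2 + (z - x)^2"
  define T where "T = x * (y - z)^2 + y * (x - z)^2 + z * (x - y)^2"
  have "0 \<le> T" unfolding T_def using assms by (intro add_nonneg_nonneg mult_nonneg_nonneg) auto
  moreover have "1 - 27 * (x * y * z) = S / 2 + 3 * T"
    using cube_sum_minus_27_prod[of x y z] assms(4) unfolding S_def T_def by simp
  ultimately have "S \<le> 0" using assms(5) by linarith
  then have "(x - y)^2 + (y - z)^2 + (z - x)^2 \<le> 0" unfolding S_def .
  then have "(x - y)^2 \<le> 0" "(y - z)^2 \<le> 0"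
    using zero_le_power2[of "x - y"] zero_le_power2[of "y - z"] zero_le_power2[of "z - x"] by linarith+
  then show "x = 1/3" "y = 1/3" "z = 1/3" using assms(4) by auto
qed

subsection \<open>The maximal relative loss\<close>

lemma Lv_le_sum_div_27:
  assumes q: "q \<in> simplex4" and v: "\<And>i. i \<in> {1..4} \<Longrightarrow> 0 \<le> v i"
  shows "Lv v q \<le> (v 1 + v 2 + v 3 + v 4) / 27"
proof -
  have scaled: "w * x \<le> w / 27" if "0 \<le> w" "x \<le> 1/27" for w x :: real
    using mult_left_mono[OF that(2,1)] by simp
  have nn: "q 1 \<ge> 0" "q 2 \<ge> 0" "q 3 \<ge> 0" "q 4 \<ge> 0" "q 1 + q 2 + q 3 + q 4 = 1"
    using q unfolding simplex4_iff by auto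
  have t: "q 1 * q 2 * q 3 \<le> 1/27" "q 1 * q 2 * q 4 \<le> 1/27" "q 1 * q 3 * q 4 \<le> 1/27"
    "q 2 * q 3 * q 4 \<le> 1/27"
    using nn by (intro prod3_le_1_27; linarith)+
  have "v 4 * (q 1 * q 2 * q 3) \<le> v 4 / 27" "v 3 * (q 1 * q 2 * q 4) \<le> v 3 / 27"
    "v 2 * (q 1 * q 3 * q 4) \<le> v 2 / 27" "v 1 * (q 2 * q 3 * q 4) \<le> v 1 / 27"
    using scaled[OF v t(1)] scaled[OF v t(2)] scaled[OF v t(3)] scaled[OF v t(4)] by simp_all
  then show ?thesis unfolding Lv_def by (simp add: mult.assoc)
qed

lemma Lv_le_maxL:
  assumes "\<And>i. i \<in> {1..4} \<Longrightarrow> 0 \<le> v i" "q \<in> simplex4"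
  shows "Lv v q \<le> maxL v"
  unfolding maxL_def
proof (rule cSup_upper)
  show "bdd_above (Lv v ` simplex4)"
    using Lv_le_sum_div_27 assms(1) by (intro bdd_aboveI2) blast
qed (use assms(2) in simp)

lemma maxL_le_sum_div_27:
  assumes "\<And>i. i \<in> {1..4} \<Longrightarrow> 0 \<le> v i"
  shows "maxL v \<le> (v 1 + v 2 + v 3 + v 4) / 27"
  unfolding maxL_def using face_centroid_simplex4[of 4] Lv_le_sum_div_27 assms
  by (intro cSup_least) auto

lemma maxL_ge_first:
  assumes "\<And>i. i \<in> {1..4} \<Longrightarrow> 0 \<le> v i"
  shows "v 1 / 27 \<le> maxL v"
proof -
  have "face_centroid 1 \<in> simplex4" by (simp add: face_centroid_simplex4)
  with assms have "Lv v (face_centroid 1) \<le> maxL v" by (rule Lv_le_maxL)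
  then show ?thesis by (simp add: Lv_face_centroid)
qed

lemma powr_third_27_mult:
  assumes "(m :: real) \<ge> 0"
  shows "(27 * m) powr (1/3) = 3 * m powr (1/3)"
proof -
  have "(27 :: real) powr (1/3) = (3 powr 3) powr (1/3)" by simp
  also have "\<dots> = 3" by (simp add: powr_powr)
  finally show ?thesis using assms by (simp add: powr_mult)
qed

lemma maxL_mult_le_Lv:
  assumes p: "p \<in> simplex4" and first: "p 2 \<le> p 1" "p 3 \<le> p 1" "p 4 \<le> p 1"
    and v: "\<And>i. i \<in> {1..4} \<Longrightarrow> 0 \<le> v i"
  shows "27 * (p 2 * p 3 * p 4) * maxL v \<le> Lv v p"
proof -
  define m where "m = p 2 * p 3 * p 4"
  have nn: "p 1 \<ge> 0" "p 2 \<ge> 0" "p 3 \<ge> 0" "p 4 \<ge> 0" using p unfolding simplex4_iff by auto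
  then have "m \<ge> 0" unfolding m_def by simp
  have "0 \<le> v 2" "0 \<le> v 3" "0 \<le> v 4" using v by auto
  moreover have "m \<le> p 1 * p 2 * p 3" "m \<le> p 1 * p 2 * p 4" "m \<le> p 1 * p 3 * p 4"
    using mult_right_mono[of "p 4" "p 1" "p 2 * p 3"] mult_right_mono[of "p 3" "p 1" "p 2 * p 4"]
      mult_right_mono[of "p 2" "p 1" "p 3 * p 4"] first nn
    unfolding m_def by (simp_all add: ac_simps)
  ultimately have "v 4 * m \<le> v 4 * (p 1 * p 2 * p 3)" "v 3 * m \<le> v 3 * (p 1 * p 2 * p 4)"
    "v 2 * m \<le> v 2 * (p 1 * p 3 * p 4)"
    by (simp_all add: mult_left_mono)
  have "27 * m * maxL v = m * (27 * maxL v)" by simp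
  also have "\<dots> \<le> m * (v 1 + v 2 + v 3 + v 4)"
    using maxL_le_sum_div_27[of v] v \<open>m \<ge> 0\<close> by (intro mult_left_mono) auto
  also have "\<dots> \<le> Lv v p"
    using \<open>v 4 * m \<le> _\<close> \<open>v 3 * m \<le> _\<close> \<open>v 2 * m \<le> _\<close> unfolding Lv_def m_def by (simp add: algebra_simps)
  finally show ?thesis unfolding m_def .
qed

lemma Rloss_le:
  assumes pc: "argmaxL vc = pc" "pc \<in> simplex4" and first: "pc 2 \<le> pc 1" "pc 3 \<le> pc 1" "pc 4 \<le> pc 1"
    and vt: "\<And>i. i \<in> {1..4} \<Longrightarrow> 0 < vt i"
  shows "Rloss vt vc \<le> 1 - 3 * (pc 2 * pc 3 * pc 4) powr (1/3)"
proof -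
  define m where "m = pc 2 * pc 3 * pc 4"
  have "m \<ge> 0" unfolding m_def using pc(2) unfolding simplex4_iff by simp
  have vt_nonneg: "0 \<le> vt i" if "i \<in> {1..4}" for i using vt[OF that] by simp
  have "0 < vt 1 / 27" using vt by simp
  also have "\<dots> \<le> maxL vt" using vt_nonneg by (rule maxL_ge_first)
  finally have "maxL vt > 0" .
  moreover have "27 * m * maxL vt \<le> Lv vt pc"
    unfolding m_def using pc(2) first vt_nonneg by (rule maxL_mult_le_Lv)
  ultimately have "27 * m \<le> Lv vt pc / maxL vt" by (simp add: pos_le_divide_eq)
  then have "(27 * m) powr (1/3) \<le> (Lv vt pc / maxL vt) powr (1/3)"
    using \<open>m \<ge> 0\<close> by (intro powr_mono2) auto
  then show ?thesis unfolding Rloss_def pc(1) m_def[symmetric]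
    using powr_third_27_mult[OF \<open>m \<ge> 0\<close>] by simp
qed

lemma Rloss_tendsto:
  assumes a: "0 < a" and pc: "argmaxL vc = pc" "pc \<in> simplex4"
    and first: "pc 2 \<le> pc 1" "pc 3 \<le> pc 1" "pc 4 \<le> pc 1"
  shows "((\<lambda>M. Rloss (\<lambda>i. if i = 1 then M else a) vc) \<longlongrightarrow> 1 - 3 * (pc 2 * pc 3 * pc 4) powr (1/3)) at_top"
proof -
  define m where "m = pc 2 * pc 3 * pc 4"
  define w where "w = (\<lambda>(M::real) (i::nat). if i = 1 then M else a)"
  define ratio where "ratio = (\<lambda>M. Lv (w M) pc / maxL (w M))"
  have nn: "pc 1 \<ge> 0" "pc 2 \<ge> 0" "pc 3 \<ge> 0" "pc 4 \<ge> 0" "pc 1 + pc 2 + pc 3 + pc 4 = 1"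
    using pc(2) unfolding simplex4_iff by auto
  then have "m \<ge> 0" unfolding m_def by simp
  have bounds: "27 * m \<le> ratio M \<and> ratio M \<le> 27 * m + 3 * a / M" if "a \<le> M" for M
  proof -
    have w_nonneg: "0 \<le> w M i" if "i \<in> {1..4}" for i unfolding w_def using a \<open>a \<le> M\<close> by simp
    have "0 < M / 27" using a that by simp
    also have "M / 27 \<le> maxL (w M)" using maxL_ge_first[of "w M", OF w_nonneg] by (simp add: w_def)
    finally have "maxL (w M) > 0" .
    have "27 * m * maxL (w M) \<le> Lv (w M) pc"
      unfolding m_def using pc(2) first w_nonneg by (rule maxL_mult_le_Lv)
    then have "27 * m \<le> ratio M" unfolding ratio_def using \<open>maxL (w M) > 0\<close> by (simp add: pos_le_divide_eq)
    have "a * (pc 1 * pc 2 * pc 3) \<le> a * (1/27)" "a * (pc 1 * pc 2 * pc 4) \<le> a * (1/27)"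
      "a * (pc 1 * pc 3 * pc 4) \<le> a * (1/27)"
      using nn a by (intro mult_left_mono prod3_le_1_27; simp; linarith)+
    then have "Lv (w M) pc \<le> a / 9 + M * m" unfolding Lv_def w_def m_def by (simp add: algebra_simps)
    moreover have "0 \<le> a / 9 + M * m" using a that \<open>m \<ge> 0\<close> by simp
    ultimately have "ratio M \<le> (a / 9 + M * m) / (M / 27)"
      unfolding ratio_def using \<open>0 < M / 27\<close> \<open>M / 27 \<le> maxL (w M)\<close> by (intro frac_le)
    also have "\<dots> = 27 * m + 3 * a / M" using \<open>0 < M / 27\<close> by (simp add: field_simps)
    finally show ?thesis using \<open>27 * m \<le> ratio M\<close> by simp
  qed
  have "((\<lambda>M. 27 * m + 3 * a / M) \<longlongrightarrow> 27 * m + 0) at_top"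
    by (intro tendsto_add tendsto_const tendsto_divide_0[OF tendsto_const]
        filterlim_at_top_imp_at_infinity filterlim_ident)
  moreover have lower: "\<forall>\<^sub>F M in at_top. 27 * m \<le> ratio M"
    and "\<forall>\<^sub>F M in at_top. ratio M \<le> 27 * m + 3 * a / M"
    unfolding eventually_at_top_linorder using bounds by blast+
  ultimately have "(ratio \<longlongrightarrow> 27 * m) at_top"
    using tendsto_sandwich[OF lower _ tendsto_const] by simp
  moreover have "\<forall>\<^sub>F M in at_top. 0 \<le> ratio M"
    by (rule eventually_mono[OF lower]) (use \<open>m \<ge> 0\<close> in auto)
  ultimately have "((\<lambda>M. 1 - ratio M powr (1/3)) \<longlongrightarrow> 1 - (27 * m) powr (1/3)) at_top"
    by (intro tendsto_diff tendsto_const tendsto_powr') auto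
  then show ?thesis unfolding Rloss_def pc(1) ratio_def w_def m_def
    by (simp add: powr_third_27_mult nn)
qed

lemma Rmax_eq:
  assumes a: "0 < a" and pc: "argmaxL vc = pc" "pc \<in> simplex4"
    and first: "pc 2 \<le> pc 1" "pc 3 \<le> pc 1" "pc 4 \<le> pc 1"
  shows "Rmax a vc = 1 - 3 * (pc 2 * pc 3 * pc 4) powr (1/3)"
proof -
  define V where "V = {vt :: nat \<Rightarrow> real. \<forall>i\<in>{1..4}. a \<le> vt i}"
  define c where "c = 1 - 3 * (pc 2 * pc 3 * pc 4) powr (1/3)"
  have upper: "Rloss vt vc \<le> c" if "vt \<in> V" for vt
    unfolding c_def using pc first
  proof (rule Rloss_le)
    show "0 < vt i" if "i \<in> {1..4}" for i using \<open>vt \<in> V\<close> that a unfolding V_def by force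
  qed
  have "(\<lambda>i. a) \<in> V" unfolding V_def by simp
  then have "Rmax a vc \<le> c" unfolding Rmax_def V_def[symmetric] using upper by (intro cSup_least) auto
  moreover have "c \<le> Rmax a vc"
  proof (rule tendsto_upperbound)
    show "((\<lambda>M. Rloss (\<lambda>i. if i = 1 then M else a) vc) \<longlongrightarrow> c) at_top"
      unfolding c_def using a pc first by (rule Rloss_tendsto)
    have "Rloss (\<lambda>i. if i = 1 then M else a) vc \<le> Rmax a vc" if "a \<le> M" for M
      unfolding Rmax_def V_def[symmetric] using that upper
      by (intro cSup_upper bdd_aboveI2[where M = c]) (auto simp: V_def)
    then show "\<forall>\<^sub>F M in at_top. Rloss (\<lambda>i. if i = 1 then M else a) vc \<le> Rmax a vc"
      unfolding eventually_at_top_linorder by blast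
  qed simp
  ultimately show ?thesis unfolding c_def by simp
qed

definition Lv_maximiser :: "(nat \<Rightarrow> real) \<Rightarrow> (nat \<Rightarrow> real) \<Rightarrow> bool" where
  "Lv_maximiser v p \<longleftrightarrow> p \<in> simplex4 \<and> (\<forall>q\<in>simplex4. Lv v q \<le> Lv v p)"

lemma Lv_maximiser_exists: "\<exists>p. Lv_maximiser v p"
proof -
  define S where "S = {x :: real \<times> real \<times> real \<times> real. 0 \<le> fst x \<and> 0 \<le> fst (snd x)
     \<and> 0 \<le> fst (snd (snd x)) \<and> 0 \<le> snd (snd (snd x))
     \<and> fst x + fst (snd x) + fst (snd (snd x)) + snd (snd (snd x)) = 1}"
  define emb :: "real \<times> real \<times> real \<times> real \<Rightarrow> nat \<Rightarrow> real" where
    "emb = (\<lambda>x i. if i = 1 then fst x else if i = 2 then fst (snd x) else if i = 3 then fst (snd (snd x))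
       else if i = 4 then snd (snd (snd x)) else 0)"
  have Lv_emb: "(\<lambda>x. Lv v (emb x)) = (\<lambda>x. v 4 * fst x * fst (snd x) * fst (snd (snd x))
      + v 3 * fst x * fst (snd x) * snd (snd (snd x)) + v 2 * fst x * fst (snd (snd x)) * snd (snd (snd x))
      + v 1 * fst (snd x) * fst (snd (snd x)) * snd (snd (snd x)))"
    unfolding Lv_def emb_def by simp
  have "closed S" unfolding S_def
    by (intro closed_Collect_conj closed_Collect_le closed_Collect_eq continuous_intros)
  moreover have "bounded S" unfolding bounded_iff
  proof (intro exI ballI)
    fix x assume "x \<in> S"
    obtain x1 x2 x3 x4 where x: "x = (x1, x2, x3, x4)" by (cases x) auto
    have "norm x \<le> norm x1 + (norm x2 + (norm x3 + norm x4))" unfolding x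
      by (meson add_left_mono norm_Pair_le order_trans)
    also have "\<dots> = 1" using \<open>x \<in> S\<close> unfolding S_def x by simp
    finally show "norm x \<le> 1" .
  qed
  ultimately have "compact S" by (simp add: compact_eq_bounded_closed)
  have "continuous_on S (\<lambda>x. v 4 * fst x * fst (snd x) * fst (snd (snd x))
      + v 3 * fst x * fst (snd x) * snd (snd (snd x)) + v 2 * fst x * fst (snd (snd x)) * snd (snd (snd x))
      + v 1 * fst (snd x) * fst (snd (snd x)) * snd (snd (snd x)))"
    by (intro continuous_intros)
  then have "continuous_on S (\<lambda>x. Lv v (emb x))" unfolding Lv_emb .
  moreover have "(1, 0, 0, 0) \<in> S" unfolding S_def by simp
  ultimately obtain x where "x \<in> S" and x_max: "\<And>y. y \<in> S \<Longrightarrow> Lv v (emb y) \<le> Lv v (emb x)"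
    using continuous_attains_sup[OF \<open>compact S\<close>] by blast
  have "emb x \<in> simplex4" using \<open>x \<in> S\<close> unfolding S_def simplex4_iff emb_def by auto
  moreover have "Lv v q \<le> Lv v (emb x)" if q: "q \<in> simplex4" for q
  proof -
    have "(q 1, q 2, q 3, q 4) \<in> S" using q unfolding S_def simplex4_iff by auto
    moreover have "emb (q 1, q 2, q 3, q 4) = q" using q unfolding emb_def simplex4_iff by auto
    ultimately show ?thesis using x_max[of "(q 1, q 2, q 3, q 4)"] by simp
  qed
  ultimately show ?thesis unfolding Lv_maximiser_def by blast
qed

lemma argmaxL_eqI:
  assumes "Lv_maximiser v p" "\<And>q. Lv_maximiser v q \<Longrightarrow> q = p"
  shows "argmaxL v = p"
  unfolding argmaxL_def
proof (rule the_equality)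
  show "p \<in> simplex4 \<and> (\<forall>q\<in>simplex4. Lv v q \<le> Lv v p)"
    using assms(1) unfolding Lv_maximiser_def .
  show "q = p" if "q \<in> simplex4 \<and> (\<forall>q'\<in>simplex4. Lv v q' \<le> Lv v q)" for q
    using that assms(2) unfolding Lv_maximiser_def by simp
qed

lemma Lv_maximiser_transpose:
  assumes ij: "i \<in> {1..4}" "j \<in> {1..4}" and max: "Lv_maximiser v p"
  shows "Lv_maximiser (v \<circ> Transposition.transpose i j) (p \<circ> Transposition.transpose i j)"
  unfolding Lv_maximiser_def
proof (intro conjI ballI)
  let ?\<tau> = "Transposition.transpose i j"
  show "p \<circ> ?\<tau> \<in> simplex4"
    using max unfolding Lv_maximiser_def by (simp add: simplex4_transpose[OF ij])
  fix q assume "q \<in> simplex4"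
  then have "Lv v (q \<circ> ?\<tau>) \<le> Lv v p"
    using max simplex4_transpose[OF ij] unfolding Lv_maximiser_def by simp
  moreover have "Lv (v \<circ> ?\<tau>) q = Lv v (q \<circ> ?\<tau>)"
    using Lv_transpose[OF ij, of v "q \<circ> ?\<tau>"] by (simp add: comp_assoc)
  ultimately show "Lv (v \<circ> ?\<tau>) q \<le> Lv (v \<circ> ?\<tau>) (p \<circ> ?\<tau>)"
    by (simp add: Lv_transpose[OF ij])
qed

definition Lv_deriv :: "(nat \<Rightarrow> real) \<Rightarrow> (nat \<Rightarrow> real) \<Rightarrow> (nat \<Rightarrow> real) \<Rightarrow> real" where
  "Lv_deriv v p d =
     v 4 * (d 1 * p 2 * p 3 + p 1 * d 2 * p 3 + p 1 * p 2 * d 3)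
   + v 3 * (d 1 * p 2 * p 4 + p 1 * d 2 * p 4 + p 1 * p 2 * d 4)
   + v 2 * (d 1 * p 3 * p 4 + p 1 * d 3 * p 4 + p 1 * p 3 * d 4)
   + v 1 * (d 2 * p 3 * p 4 + p 2 * d 3 * p 4 + p 2 * p 3 * d 4)"

definition Lv_deriv2 :: "(nat \<Rightarrow> real) \<Rightarrow> (nat \<Rightarrow> real) \<Rightarrow> (nat \<Rightarrow> real) \<Rightarrow> real" where
  "Lv_deriv2 v p d =
     v 4 * (p 1 * d 2 * d 3 + d 1 * p 2 * d 3 + d 1 * d 2 * p 3)
   + v 3 * (p 1 * d 2 * d 4 + d 1 * p 2 * d 4 + d 1 * d 2 * p 4)
   + v 2 * (p 1 * d 3 * d 4 + d 1 * p 3 * d 4 + d 1 * d 3 * p 4)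
   + v 1 * (p 2 * d 3 * d 4 + d 2 * p 3 * d 4 + d 2 * d 3 * p 4)"

lemma Lv_line:
  "Lv v (\<lambda>i. p i + t * d i) = Lv v p + Lv_deriv v p d * t + Lv_deriv2 v p d * t^2 + Lv v d * t^3"
  unfolding Lv_def Lv_deriv_def Lv_deriv2_def
  by (simp add: algebra_simps power2_eq_square power3_eq_cube)

lemma Lv_deriv_uminus: "Lv_deriv v p (\<lambda>i. - d i) = - Lv_deriv v p d"
  unfolding Lv_deriv_def by (simp add: algebra_simps)

lemma Lv_deriv_at_end:
  "Lv_deriv v (\<lambda>i. p i + d i) (\<lambda>i. - d i) = - (Lv_deriv v p d + 2 * Lv_deriv2 v p d + 3 * Lv v d)"
  unfolding Lv_deriv_def Lv_deriv2_def Lv_def by (simp add: algebra_simps)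

lemma cubic_nonpos_near_0_imp_linear_coeff_nonpos:
  fixes b1 b2 b3 \<delta> :: real
  assumes "\<delta> > 0" "\<And>t. 0 < t \<Longrightarrow> t \<le> \<delta> \<Longrightarrow> b1 * t + b2 * t^2 + b3 * t^3 \<le> 0"
  shows "b1 \<le> 0"
proof (rule tendsto_upperbound)
  show "((\<lambda>t. b1 + b2 * t + b3 * t^2) \<longlongrightarrow> b1) (at_right 0)"
    by (auto intro!: tendsto_eq_intros)
  show "\<forall>\<^sub>F t in at_right 0. b1 + b2 * t + b3 * t^2 \<le> 0"
    using eventually_at_right_real[OF assms(1)]
  proof eventually_elim
    case (elim t)
    then have "t * (b1 + b2 * t + b3 * t^2) \<le> 0"
      using assms(2)[of t] by (simp add: algebra_simps power2_eq_square power3_eq_cube)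
    with elim show ?case by (simp add: mult_le_0_iff)
  qed
qed simp

lemma Lv_maximiser_deriv_nonpos:
  assumes "Lv_maximiser v p" "\<delta> > 0" "\<And>t. 0 < t \<Longrightarrow> t \<le> \<delta> \<Longrightarrow> (\<lambda>i. p i + t * d i) \<in> simplex4"
  shows "Lv_deriv v p d \<le> 0"
proof (rule cubic_nonpos_near_0_imp_linear_coeff_nonpos[OF assms(2)])
  fix t :: real assume "0 < t" "t \<le> \<delta>"
  then have "Lv v (\<lambda>i. p i + t * d i) \<le> Lv v p"
    using assms(1,3) unfolding Lv_maximiser_def by blast
  then show "Lv_deriv v p d * t + Lv_deriv2 v p d * t^2 + Lv v d * t^3 \<le> 0"
    by (simp add: Lv_line)
qed

lemma Lv_maximiser_deriv_towards_nonpos: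
  assumes max: "Lv_maximiser v p" and q: "q \<in> simplex4"
  shows "Lv_deriv v p (\<lambda>i. q i - p i) \<le> 0"
proof (rule Lv_maximiser_deriv_nonpos[OF max zero_less_one])
  have p: "p \<in> simplex4" using max unfolding Lv_maximiser_def by simp
  fix t :: real assume t: "0 < t" "t \<le> 1"
  show "(\<lambda>i. p i + t * (q i - p i)) \<in> simplex4"
  proof (rule simplex4_line[OF p q \<open>t \<le> 1\<close>])
    show "- t \<le> p i" if "i \<in> {1..4}" for i using p that t unfolding simplex4_def by force
  qed
qed

lemma Lv_maximiser_interior_deriv_eq_0:
  assumes max: "Lv_maximiser v p" and pos: "\<And>i. i \<in> {1..4} \<Longrightarrow> p i > 0" and q: "q \<in> simplex4"
  shows "Lv_deriv v p (\<lambda>i. q i - p i) = 0"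
proof -
  have p: "p \<in> simplex4" using max unfolding Lv_maximiser_def by simp
  define \<delta> where "\<delta> = Min (p ` {1..4})"
  have "\<delta> \<in> p ` {1..4}" unfolding \<delta>_def by (intro Min_in) auto
  then have "\<delta> > 0" using pos by auto
  have \<delta>_le: "\<delta> \<le> p i" if "i \<in> {1..4}" for i unfolding \<delta>_def using that by (intro Min_le) auto
  have "(\<lambda>i. p i + t * - (q i - p i)) \<in> simplex4" if "0 < t" "t \<le> \<delta>" for t
  proof -
    have "(\<lambda>i. p i + - t * (q i - p i)) \<in> simplex4"
      using simplex4_line[OF p q, of "- t"] that \<delta>_le by force
    then show ?thesis by (simp add: algebra_simps)
  qed
  then have "Lv_deriv v p (\<lambda>i. - (q i - p i)) \<le> 0"
    by (rule Lv_maximiser_deriv_nonpos[OF max \<open>\<delta> > 0\<close>])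
  moreover have "Lv_deriv v p (\<lambda>i. q i - p i) \<le> 0"
    by (rule Lv_maximiser_deriv_towards_nonpos[OF max q])
  ultimately show ?thesis using Lv_deriv_uminus[of v p "\<lambda>i. q i - p i"] by linarith
qed

subsection \<open>Location of the maximiser\<close>

lemma Lv_maximiser_face4:
  assumes "v 4 > 0" and max: "Lv_maximiser v p" and "p 4 = 0"
  shows "v 1 + v 2 + v 3 \<le> v 4"
proof -
  have p: "p \<in> simplex4" using max unfolding Lv_maximiser_def by simp
  have "Lv v (face_centroid 4) \<le> Lv v p"
    using max face_centroid_simplex4[of 4] unfolding Lv_maximiser_def by simp
  then have "v 4 * (1/27) \<le> Lv v p" by (simp add: Lv_face_centroid)
  also have "Lv v p = v 4 * (p 1 * p 2 * p 3)" using \<open>p 4 = 0\<close> unfolding Lv_def by simp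
  finally have "1/27 \<le> p 1 * p 2 * p 3" using \<open>v 4 > 0\<close> by (simp add: mult_le_cancel_left_pos)
  moreover have "p 1 \<ge> 0" "p 2 \<ge> 0" "p 3 \<ge> 0" "p 1 + p 2 + p 3 = 1"
    using p \<open>p 4 = 0\<close> unfolding simplex4_iff by auto
  ultimately have thirds: "p 1 = 1/3" "p 2 = 1/3" "p 3 = 1/3"
    using prod3_ge_1_27_imp_thirds[of "p 1" "p 2" "p 3"] by simp_all
  define vertex4 :: "nat \<Rightarrow> real" where "vertex4 = (\<lambda>i. if i = 4 then 1 else 0)"
  have "vertex4 \<in> simplex4" unfolding simplex4_iff vertex4_def by auto
  then have "Lv_deriv v p (\<lambda>i. vertex4 i - p i) \<le> 0" by (rule Lv_maximiser_deriv_towards_nonpos[OF max])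
  moreover have "Lv_deriv v p (\<lambda>i. vertex4 i - p i) = (v 1 + v 2 + v 3 - v 4) / 9"
    unfolding Lv_deriv_def vertex4_def thirds \<open>p 4 = 0\<close> by simp
  ultimately show ?thesis by simp
qed

lemma Lv_maximiser_face:
  assumes "k \<in> {1..4}" "v k > 0" "Lv_maximiser v p" "p k = 0"
  shows "v 1 + v 2 + v 3 + v 4 \<le> 2 * v k"
proof -
  let ?\<tau> = "Transposition.transpose k 4"
  have "Lv_maximiser (v \<circ> ?\<tau>) (p \<circ> ?\<tau>)" using assms by (intro Lv_maximiser_transpose) auto
  then have "(v \<circ> ?\<tau>) 1 + (v \<circ> ?\<tau>) 2 + (v \<circ> ?\<tau>) 3 \<le> (v \<circ> ?\<tau>) 4"
    using assms Lv_maximiser_face4[of "v \<circ> ?\<tau>" "p \<circ> ?\<tau>"] by simp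
  moreover have "k = 1 \<or> k = 2 \<or> k = 3 \<or> k = 4" using assms(1) by auto
  ultimately show ?thesis by (auto simp: transpose_def)
qed

lemma Lv_maximiser_pos:
  assumes v: "\<And>i. i \<in> {1..4} \<Longrightarrow> v i > 0"
    and balanced: "\<And>i. i \<in> {1..4} \<Longrightarrow> 2 * v i < v 1 + v 2 + v 3 + v 4"
    and max: "Lv_maximiser v p" and k: "k \<in> {1..4}"
  shows "p k > 0"
proof -
  have "p k \<ge> 0" using max k unfolding Lv_maximiser_def simplex4_def by auto
  moreover have "p k \<noteq> 0"
  proof
    assume "p k = 0"
    with k v[OF k] max have "v 1 + v 2 + v 3 + v 4 \<le> 2 * v k" by (rule Lv_maximiser_face)
    with balanced[OF k] show False by simp
  qed
  ultimately show ?thesis by simp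
qed

lemma Lv_large_v4_deficit:
  "v 4 / 27 - Lv v p = (v 4 - (v 1 + v 2 + v 3)) * (1/27 - p 1 * p 2 * p 3)
     + v 1 * (1/27 - p 2 * p 3 * (p 1 + p 4)) + v 2 * (1/27 - p 1 * p 3 * (p 2 + p 4))
     + v 3 * (1/27 - p 1 * p 2 * (p 3 + p 4))"
  unfolding Lv_def by (simp add: algebra_simps)

lemma Lv_bound_large_v4:
  assumes v: "v 1 > 0" "v 2 > 0" "v 3 > 0" and large: "v 1 + v 2 + v 3 \<le> v 4"
    and p: "p \<in> simplex4"
  shows "Lv v p \<le> v 4 / 27 \<and> (Lv v p = v 4 / 27 \<longrightarrow> p = face_centroid 4)"
proof -
  have nn: "p 1 \<ge> 0" "p 2 \<ge> 0" "p 3 \<ge> 0" "p 4 \<ge> 0" "p 1 + p 2 + p 3 + p 4 = 1"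
    using p unfolding simplex4_iff by auto
  define T0 where "T0 = (v 4 - (v 1 + v 2 + v 3)) * (1/27 - p 1 * p 2 * p 3)"
  define T1 where "T1 = v 1 * (1/27 - p 2 * p 3 * (p 1 + p 4))"
  define T2 where "T2 = v 2 * (1/27 - p 1 * p 3 * (p 2 + p 4))"
  define T3 where "T3 = v 3 * (1/27 - p 1 * p 2 * (p 3 + p 4))"
  have "p 1 * p 2 * p 3 \<le> 1/27" "p 2 * p 3 * (p 1 + p 4) \<le> 1/27"
    "p 1 * p 3 * (p 2 + p 4) \<le> 1/27" "p 1 * p 2 * (p 3 + p 4) \<le> 1/27"
    using nn by (intro prod3_le_1_27; linarith)+
  then have T: "T0 \<ge> 0" "T1 \<ge> 0" "T2 \<ge> 0" "T3 \<ge> 0"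
    unfolding T0_def T1_def T2_def T3_def using v large by (simp_all add: mult_nonneg_nonneg)
  have deficit: "v 4 / 27 - Lv v p = T0 + T1 + T2 + T3"
    unfolding T0_def T1_def T2_def T3_def by (rule Lv_large_v4_deficit)
  show ?thesis
  proof (intro conjI impI)
    show "Lv v p \<le> v 4 / 27" using deficit T by linarith
    assume "Lv v p = v 4 / 27"
    then have "T1 = 0" "T2 = 0" using deficit T by linarith+
    then have "1/27 \<le> p 2 * p 3 * (p 1 + p 4)" "1/27 \<le> p 1 * p 3 * (p 2 + p 4)"
      unfolding T1_def T2_def using v by auto
    moreover have "p 2 + p 3 + (p 1 + p 4) = 1" "p 1 + p 3 + (p 2 + p 4) = 1" using nn by linarith+
    ultimately have "p 2 = 1/3" "p 3 = 1/3" "p 1 = 1/3"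
      using nn prod3_ge_1_27_imp_thirds(1,2)[of "p 2" "p 3" "p 1 + p 4"]
        prod3_ge_1_27_imp_thirds(1)[of "p 1" "p 3" "p 2 + p 4"] by (simp_all only: add_nonneg_nonneg)
    moreover from this have "p 4 = 0" using nn(5) by linarith
    moreover have "face_centroid 4 \<in> simplex4" by (simp add: face_centroid_simplex4)
    ultimately show "p = face_centroid 4"
      by (intro simplex4_eqI[OF p]) (simp_all add: face_centroid_def)
  qed
qed

lemma argmaxL_large_v4:
  assumes v: "v 1 > 0" "v 2 > 0" "v 3 > 0" and large: "v 1 + v 2 + v 3 \<le> v 4"
  shows "argmaxL v = face_centroid 4"
proof (rule argmaxL_eqI)
  have centroid: "face_centroid 4 \<in> simplex4" "Lv v (face_centroid 4) = v 4 / 27"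
    by (simp_all add: face_centroid_simplex4 Lv_face_centroid)
  note bound = Lv_bound_large_v4[OF v large]
  have "Lv v q \<le> Lv v (face_centroid 4)" if "q \<in> simplex4" for q
    using bound[OF that] centroid(2) by linarith
  then show "Lv_maximiser v (face_centroid 4)" unfolding Lv_maximiser_def using centroid(1) by blast
  fix q assume "Lv_maximiser v q"
  then have q: "q \<in> simplex4" and "Lv v (face_centroid 4) \<le> Lv v q"
    using centroid(1) unfolding Lv_maximiser_def by auto
  then have "Lv v q = v 4 / 27" using bound[OF q] centroid(2) by linarith
  then show "q = face_centroid 4" using bound[OF q] by simp
qed

lemma Lv_le_transpose_first:
  assumes "j \<in> {2,3,4}" "p \<in> simplex4" "p 1 \<le> p j" "v 1 \<le> v j"
  shows "Lv v p \<le> Lv v (p \<circ> Transposition.transpose 1 j)"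
proof -
  have "Lv v (p \<circ> Transposition.transpose 1 j) - Lv v p = (p 1 - p j) * (v 1 - v j)
      * (if j = 2 then p 3 * p 4 else if j = 3 then p 2 * p 4 else p 2 * p 3)"
    using assms(1) unfolding Lv_def by (auto simp: transpose_def algebra_simps)
  moreover have "0 \<le> (p 1 - p j) * (v 1 - v j)" using assms(3,4) by (simp add: mult_nonpos_nonpos)
  moreover have "p 2 \<ge> 0" "p 3 \<ge> 0" "p 4 \<ge> 0" using assms(2) unfolding simplex4_iff by auto
  ultimately have "0 \<le> Lv v (p \<circ> Transposition.transpose 1 j) - Lv v p" by simp
  then show ?thesis by simp
qed

lemma unique_Lv_maximiser_le_first:
  assumes j: "j \<in> {2,3,4}" "v 1 \<le> v j"
    and max: "Lv_maximiser v p" and unique: "\<And>q. Lv_maximiser v q \<Longrightarrow> q = p"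
  shows "p j \<le> p 1"
proof (rule ccontr)
  assume "\<not> p j \<le> p 1"
  have p: "p \<in> simplex4" using max unfolding Lv_maximiser_def by simp
  have "p \<circ> Transposition.transpose 1 j \<in> simplex4" using j p by (intro simplex4_transpose) auto
  moreover have "Lv v p \<le> Lv v (p \<circ> Transposition.transpose 1 j)"
    using j p \<open>\<not> p j \<le> p 1\<close> by (intro Lv_le_transpose_first) auto
  ultimately have "Lv_maximiser v (p \<circ> Transposition.transpose 1 j)"
    using max unfolding Lv_maximiser_def by force
  then have "p \<circ> Transposition.transpose 1 j = p" by (rule unique)
  then have "p j = p 1" by (metis comp_apply transpose_apply_first)
  then show False using \<open>\<not> p j \<le> p 1\<close> by simp
qed

definition discr_form :: "real \<Rightarrow> real \<Rightarrow> real \<Rightarrow> real \<Rightarrow> real \<Rightarrow> real \<Rightarrow> real \<Rightarrow> real \<Rightarrow> real" where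
  "discr_form u1 u2 u3 u4 y1 y2 y3 y4 = (u1 * y1 + u2 * y2 + u3 * y3 + u4 * y4)^2
     + (u1 + u2 + u3 + u4) * ((u2 + u3 + u4 - u1) * y1^2 + (u1 + u3 + u4 - u2) * y2^2
                            + (u1 + u2 + u4 - u3) * y3^2 + (u1 + u2 + u3 - u4) * y4^2)"

lemma discr_form_swap12: "discr_form u1 u2 u3 u4 y1 y2 y3 y4 = discr_form u2 u1 u3 u4 y2 y1 y3 y4"
  unfolding discr_form_def by (simp add: algebra_simps)

lemma discr_form_swap13: "discr_form u1 u2 u3 u4 y1 y2 y3 y4 = discr_form u3 u2 u1 u4 y3 y2 y1 y4"
  unfolding discr_form_def by (simp add: algebra_simps)

lemma discr_form_swap14: "discr_form u1 u2 u3 u4 y1 y2 y3 y4 = discr_form u4 u2 u3 u1 y4 y2 y3 y1"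
  unfolding discr_form_def by (simp add: algebra_simps)

lemma discr_form_pos_balanced:
  fixes u1 u2 u3 u4 y1 y2 y3 y4 :: real
  assumes "u1 < u2 + u3 + u4" "u2 < u1 + u3 + u4" "u3 < u1 + u2 + u4" "u4 < u1 + u2 + u3"
    and "u1 + u2 + u3 + u4 > 0" and "y1 \<noteq> 0 \<or> y2 \<noteq> 0 \<or> y3 \<noteq> 0 \<or> y4 \<noteq> 0"
  shows "discr_form u1 u2 u3 u4 y1 y2 y3 y4 > 0"
proof -
  have "0 \<le> (u2 + u3 + u4 - u1) * y1^2" "0 \<le> (u1 + u3 + u4 - u2) * y2^2"
    "0 \<le> (u1 + u2 + u4 - u3) * y3^2" "0 \<le> (u1 + u2 + u3 - u4) * y4^2"
    using assms(1-4) by simp_all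
  moreover have "0 < (u2 + u3 + u4 - u1) * y1^2 \<or> 0 < (u1 + u3 + u4 - u2) * y2^2
      \<or> 0 < (u1 + u2 + u4 - u3) * y3^2 \<or> 0 < (u1 + u2 + u3 - u4) * y4^2"
    using assms(1-4,6) by auto
  ultimately have "(u2 + u3 + u4 - u1) * y1^2 + (u1 + u3 + u4 - u2) * y2^2
      + (u1 + u2 + u4 - u3) * y3^2 + (u1 + u2 + u3 - u4) * y4^2 > 0"
    by linarith
  with assms(5) have "0 < (u1 + u2 + u3 + u4) * ((u2 + u3 + u4 - u1) * y1^2 + (u1 + u3 + u4 - u2) * y2^2
      + (u1 + u2 + u4 - u3) * y3^2 + (u1 + u2 + u3 - u4) * y4^2)"
    by (rule mult_pos_pos)
  then show ?thesis unfolding discr_form_def by (rule add_nonneg_pos[OF zero_le_power2])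
qed

text \<open>In the remaining case one weight dominates, say \<open>u\<^sub>1 \<ge> r = u\<^sub>2 + u\<^sub>3 + u\<^sub>4\<close>; completing the
  square in \<open>y\<^sub>1\<close> and Lagrange's identity for the rest exhibit the form as a sum of nonnegative terms.\<close>

lemma discr_form_dominant_eq:
  fixes u1 u2 u3 u4 y1 y2 y3 y4 :: real
  defines "r \<equiv> u2 + u3 + u4" and "s \<equiv> u2 * y2 + u3 * y3 + u4 * y4"
  shows "r^2 * discr_form u1 u2 u3 u4 y1 y2 y3 y4 = (r^2 * y1 + u1 * s)^2
    + (u1 + r) * ((u1 - r) * ((u2 * y3 - u3 * y2)^2 + (u2 * y4 - u4 * y2)^2 + (u3 * y4 - u4 * y3)^2
                             + 2 * (u2 * u3 + u2 * u4 + u3 * u4) * (y2^2 + y3^2 + y4^2))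
                 + 2 * r^2 * ((r - u2) * y2^2 + (r - u3) * y3^2 + (r - u4) * y4^2))"
  unfolding discr_form_def r_def s_def by (simp add: algebra_simps power2_eq_square)

lemma discr_form_pos_dominant:
  fixes u1 u2 u3 u4 y1 y2 y3 y4 :: real
  assumes "u2 > 0" "u3 > 0" "u4 > 0" "u1 \<ge> u2 + u3 + u4"
    and "y1 \<noteq> 0 \<or> y2 \<noteq> 0 \<or> y3 \<noteq> 0 \<or> y4 \<noteq> 0"
  shows "discr_form u1 u2 u3 u4 y1 y2 y3 y4 > 0"
proof -
  define r where "r = u2 + u3 + u4"
  define s where "s = u2 * y2 + u3 * y3 + u4 * y4"
  define W1 where "W1 = (u1 - r) * ((u2 * y3 - u3 * y2)^2 + (u2 * y4 - u4 * y2)^2 + (u3 * y4 - u4 * y3)^2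
                             + 2 * (u2 * u3 + u2 * u4 + u3 * u4) * (y2^2 + y3^2 + y4^2))"
  define W2 where "W2 = (r - u2) * y2^2 + (r - u3) * y3^2 + (r - u4) * y4^2"
  have r: "r > 0" "r - u2 > 0" "r - u3 > 0" "r - u4 > 0" "u1 - r \<ge> 0"
    using assms by (auto simp: r_def)
  have W1: "W1 \<ge> 0" unfolding W1_def using r assms by (intro mult_nonneg_nonneg add_nonneg_nonneg) auto
  have W2: "W2 \<ge> 0" "W2 = 0 \<Longrightarrow> y2 = 0 \<and> y3 = 0 \<and> y4 = 0"
    using r unfolding W2_def by (auto intro!: add_nonneg_nonneg simp: add_nonneg_eq_0_iff)
  have eq: "r^2 * discr_form u1 u2 u3 u4 y1 y2 y3 y4 = (r^2 * y1 + u1 * s)^2 + (u1 + r) * (W1 + 2 * r^2 * W2)"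
    unfolding r_def s_def W1_def W2_def by (rule discr_form_dominant_eq)
  have "(r^2 * y1 + u1 * s)^2 + (u1 + r) * (W1 + 2 * r^2 * W2) > 0"
  proof (cases "W2 = 0")
    case True
    then have "y1 \<noteq> 0" "s = 0" using W2(2) assms(5) by (auto simp: s_def)
    then have "(r^2 * y1 + u1 * s)^2 > 0" using r by simp
    moreover have "(u1 + r) * (W1 + 2 * r^2 * W2) \<ge> 0" using r W1 W2 by simp
    ultimately show ?thesis by linarith
  next
    case False
    then have "(u1 + r) * (W1 + 2 * r^2 * W2) > 0" using r W1 W2 by (simp add: add_nonneg_pos)
    then show ?thesis by (rule add_nonneg_pos[OF zero_le_power2])
  qed
  then have "0 < r^2 * discr_form u1 u2 u3 u4 y1 y2 y3 y4" using eq by simp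
  then show ?thesis using r by (simp add: zero_less_mult_iff)
qed

lemma discr_form_pos:
  fixes u1 u2 u3 u4 y1 y2 y3 y4 :: real
  assumes "u1 > 0" "u2 > 0" "u3 > 0" "u4 > 0"
    and "y1 \<noteq> 0 \<or> y2 \<noteq> 0 \<or> y3 \<noteq> 0 \<or> y4 \<noteq> 0"
  shows "discr_form u1 u2 u3 u4 y1 y2 y3 y4 > 0"
proof -
  consider "u1 \<ge> u2 + u3 + u4" | "u2 \<ge> u1 + u3 + u4" | "u3 \<ge> u1 + u2 + u4" | "u4 \<ge> u1 + u2 + u3"
    | "u1 < u2 + u3 + u4" "u2 < u1 + u3 + u4" "u3 < u1 + u2 + u4" "u4 < u1 + u2 + u3"
    by linarith
  then show ?thesis
  proof cases
    case 1
    then show ?thesis using assms by (intro discr_form_pos_dominant) auto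
  next
    case 2
    then have "discr_form u2 u1 u3 u4 y2 y1 y3 y4 > 0" using assms by (intro discr_form_pos_dominant) auto
    then show ?thesis by (simp add: discr_form_swap12[of u1])
  next
    case 3
    then have "discr_form u3 u2 u1 u4 y3 y2 y1 y4 > 0" using assms by (intro discr_form_pos_dominant) auto
    then show ?thesis by (simp add: discr_form_swap13[of u1])
  next
    case 4
    then have "discr_form u4 u2 u3 u1 y4 y2 y3 y1 > 0" using assms by (intro discr_form_pos_dominant) auto
    then show ?thesis by (simp add: discr_form_swap14[of u1])
  next
    case 5
    then show ?thesis using assms by (intro discr_form_pos_balanced) auto
  qed
qed

subsection \<open>Strict log-concavity along lines\<close>

lemma Lv_deriv_sq_minus_eq_discr_form:
  assumes "\<And>i. i \<in> {1..4} \<Longrightarrow> p i > 0"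
  shows "(Lv_deriv v p d)^2 - 2 * Lv v p * Lv_deriv2 v p d =
     discr_form (v 1 * p 2 * p 3 * p 4) (v 2 * p 1 * p 3 * p 4) (v 3 * p 1 * p 2 * p 4) (v 4 * p 1 * p 2 * p 3)
        (d 1 / p 1) (d 2 / p 2) (d 3 / p 3) (d 4 / p 4)"
  using assms[of 1] assms[of 2] assms[of 3] assms[of 4]
  unfolding Lv_def Lv_deriv_def Lv_deriv2_def discr_form_def by (simp add: field_simps power2_eq_square)

text \<open>For \<open>f t = L\<^sub>v (p + t d)\<close> we have \<open>f 0 = L\<^sub>v p\<close>, \<open>f' 0 = Lv_deriv v p d\<close> and
  \<open>f'' 0 = 2 * Lv_deriv2 v p d\<close>, so this says \<open>(ln f)'' 0 < 0\<close>.\<close>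

lemma Lv_line_strictly_log_concave:
  fixes v p d :: "nat \<Rightarrow> real"
  assumes "\<And>i. i \<in> {1..4} \<Longrightarrow> p i > 0" "\<And>i. i \<in> {1..4} \<Longrightarrow> v i > 0"
    and "d 1 \<noteq> 0 \<or> d 2 \<noteq> 0 \<or> d 3 \<noteq> 0 \<or> d 4 \<noteq> 0"
  shows "2 * Lv v p * Lv_deriv2 v p d < (Lv_deriv v p d)^2"
proof -
  have "p 1 > 0" "p 2 > 0" "p 3 > 0" "p 4 > 0" "v 1 > 0" "v 2 > 0" "v 3 > 0" "v 4 > 0"
    using assms(1,2) by auto
  then have "discr_form (v 1 * p 2 * p 3 * p 4) (v 2 * p 1 * p 3 * p 4) (v 3 * p 1 * p 2 * p 4)
      (v 4 * p 1 * p 2 * p 3) (d 1 / p 1) (d 2 / p 2) (d 3 / p 3) (d 4 / p 4) > 0"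
    using assms(3) by (intro discr_form_pos) auto
  moreover have "(Lv_deriv v p d)^2 - 2 * Lv v p * Lv_deriv2 v p d =
     discr_form (v 1 * p 2 * p 3 * p 4) (v 2 * p 1 * p 3 * p 4) (v 3 * p 1 * p 2 * p 4)
      (v 4 * p 1 * p 2 * p 3) (d 1 / p 1) (d 2 / p 2) (d 3 / p 3) (d 4 / p 4)"
    using assms(1) by (rule Lv_deriv_sq_minus_eq_discr_form)
  ultimately show ?thesis by linarith
qed

lemma Lv_maximiser_interior_unique:
  assumes v: "\<And>i. i \<in> {1..4} \<Longrightarrow> v i > 0"
    and max_p: "Lv_maximiser v p" and pos_p: "\<And>i. i \<in> {1..4} \<Longrightarrow> p i > 0"
    and max_q: "Lv_maximiser v q" and pos_q: "\<And>i. i \<in> {1..4} \<Longrightarrow> q i > 0"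
  shows "p = q"
proof (rule ccontr)
  assume "p \<noteq> q"
  have p: "p \<in> simplex4" and q: "q \<in> simplex4" using max_p max_q unfolding Lv_maximiser_def by auto
  define d where "d = (\<lambda>i. q i - p i)"
  have d: "d 1 \<noteq> 0 \<or> d 2 \<noteq> 0 \<or> d 3 \<noteq> 0 \<or> d 4 \<noteq> 0"
    using simplex4_eqI[OF p q] \<open>p \<noteq> q\<close> unfolding d_def by auto
  have q_eq: "q = (\<lambda>i. p i + d i)" by (simp add: d_def)
  have at_p: "Lv_deriv v p d = 0"
    using Lv_maximiser_interior_deriv_eq_0[OF max_p pos_p q] by (simp add: d_def)
  have "Lv_deriv v q (\<lambda>i. - d i) = 0"
    using Lv_maximiser_interior_deriv_eq_0[OF max_q pos_q p] by (simp add: d_def)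
  then have at_q: "Lv_deriv v p d + 2 * Lv_deriv2 v p d + 3 * Lv v d = 0"
    using Lv_deriv_at_end[of v p d] q_eq by simp
  \<comment> \<open>\<open>t \<mapsto> L\<^sub>v (p + t d)\<close> takes equal values and has zero slope at \<open>t = 0\<close> and \<open>t = 1\<close>;
    for a cubic this forces the quadratic coefficient to vanish.\<close>
  have "Lv v q = Lv v p" using max_p max_q p q unfolding Lv_maximiser_def by (simp add: order_antisym)
  then have "Lv_deriv v p d + Lv_deriv2 v p d + Lv v d = 0" using Lv_line[of v p 1 d] q_eq by simp
  with at_p at_q have "Lv_deriv2 v p d = 0" by linarith
  moreover have "2 * Lv v p * Lv_deriv2 v p d < (Lv_deriv v p d)^2"
    by (rule Lv_line_strictly_log_concave) (use pos_p v d in auto)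
  ultimately show False using at_p by simp
qed

lemma Lv_maximiser_unique:
  assumes v: "\<And>i. i \<in> {1..4} \<Longrightarrow> v i > 0"
    and balanced: "\<And>i. i \<in> {1..4} \<Longrightarrow> 2 * v i < v 1 + v 2 + v 3 + v 4"
    and "Lv_maximiser v p" "Lv_maximiser v q"
  shows "p = q"
proof (rule Lv_maximiser_interior_unique[OF v assms(3) _ assms(4)])
  show "p i > 0" if "i \<in> {1..4}" for i using v balanced assms(3) that by (rule Lv_maximiser_pos)
  show "q i > 0" if "i \<in> {1..4}" for i using v balanced assms(4) that by (rule Lv_maximiser_pos)
qed

lemma argmaxL_balanced:
  assumes v: "\<And>i. i \<in> {1..4} \<Longrightarrow> v i > 0"
    and balanced: "\<And>i. i \<in> {1..4} \<Longrightarrow> 2 * v i < v 1 + v 2 + v 3 + v 4"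
    and first: "v 1 \<le> v 2" "v 1 \<le> v 3" "v 1 \<le> v 4"
  shows "argmaxL v \<in> simplex4" "argmaxL v 2 \<le> argmaxL v 1" "argmaxL v 3 \<le> argmaxL v 1"
    "argmaxL v 4 \<le> argmaxL v 1"
proof -
  obtain p where max: "Lv_maximiser v p" using Lv_maximiser_exists by blast
  have unique: "q = p" if "Lv_maximiser v q" for q
    using v balanced that max by (rule Lv_maximiser_unique)
  have "argmaxL v = p" using max unique by (rule argmaxL_eqI)
  moreover have "p j \<le> p 1" if "j \<in> {2,3,4}" "v 1 \<le> v j" for j
    using that max unique by (rule unique_Lv_maximiser_le_first)
  ultimately show "argmaxL v \<in> simplex4" "argmaxL v 2 \<le> argmaxL v 1" "argmaxL v 3 \<le> argmaxL v 1"
    "argmaxL v 4 \<le> argmaxL v 1"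
    using max first unfolding Lv_maximiser_def by auto
qed

theorem corollary3:
  fixes a :: real and vc :: "nat \<Rightarrow> real"
  assumes "0 < a"
    and "a \<le> vc 1" and "vc 1 \<le> vc 2" and "vc 2 \<le> vc 3" and "vc 3 \<le> vc 4"
  shows "(vc 4 \<ge> vc 1 + vc 2 + vc 3 \<longrightarrow> Rmax a vc = 1)
       \<and> (vc 4 < vc 1 + vc 2 + vc 3 \<longrightarrow>
            Rmax a vc = 1 - 3 * (argmaxL vc 2 * argmaxL vc 3 * argmaxL vc 4) powr (1/3))"
proof (intro conjI impI)
  have vc: "0 < vc i" if "i \<in> {1..4}" for i
  proof -
    have "i = 1 \<or> i = 2 \<or> i = 3 \<or> i = 4" using that by auto
    then show ?thesis using assms by auto
  qed
  show "Rmax a vc = 1" if "vc 1 + vc 2 + vc 3 \<le> vc 4"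
  proof -
    have "argmaxL vc = face_centroid 4" using vc that by (intro argmaxL_large_v4) auto
    moreover have "face_centroid 4 \<in> simplex4" by (simp add: face_centroid_simplex4)
    ultimately have "Rmax a vc = 1 - 3 * (face_centroid 4 2 * face_centroid 4 3 * face_centroid 4 4) powr (1/3)"
      by (rule Rmax_eq[OF \<open>0 < a\<close>]) (simp_all add: face_centroid_def)
    then show ?thesis by (simp add: face_centroid_def)
  qed
  show "Rmax a vc = 1 - 3 * (argmaxL vc 2 * argmaxL vc 3 * argmaxL vc 4) powr (1/3)"
    if small: "vc 4 < vc 1 + vc 2 + vc 3"
  proof -
    have balanced: "2 * vc i < vc 1 + vc 2 + vc 3 + vc 4" if "i \<in> {1..4}" for i
    proof -
      have "i = 1 \<or> i = 2 \<or> i = 3 \<or> i = 4" using that by auto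
      then show ?thesis using small vc[of 1] assms(3-5) by auto
    qed
    have first: "vc 1 \<le> vc 2" "vc 1 \<le> vc 3" "vc 1 \<le> vc 4" using assms(3-5) by simp_all
    note argmaxL_props = argmaxL_balanced[of vc, OF vc balanced first]
    show ?thesis using Rmax_eq[of a vc "argmaxL vc"] \<open>0 < a\<close> argmaxL_props by simp
  qed
qed

end
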